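(* Let $\mathcal{G}=(\mathfrak{g},[\cdot,\ldots,\cdot],\varepsilon,\alpha)$ be a multiplicative $n$-Hom-Lie color algebra. For each integer $p\geq 1$, the $p$th derived algebra $\mathcal{G}^p=(\mathfrak{g},[\cdot,\ldots,\cdot]^p,\varepsilon,\alpha^{2p})$, where $[\cdot,\ldots,\cdot]^p=\alpha^{2p-1}\circ[\cdot,\ldots,\cdot]$, is an $n$-Hom-Lie color algebra (and $\mathcal{G}^0:=\mathcal{G}$).
   Context: $\mathbb{K}$ is a field of characteristic zero and $\Gamma$ an abelian group. A bicharacter is a map $\varepsilon:\Gamma\times\Gamma\to\mathbb{K}\setminus\{0\}$ with $\varepsilon(a,b)\varepsilon(b,a)=1$, $\varepsilon(a,b+c)=\varepsilon(a,b)\varepsilon(a,c)$, $\varepsilon(a+b,c)=\varepsilon(a,c)\varepsilon(b,c)$. For homogeneous $x,y$, $\varepsilon(x,y)=\varepsilon(|x|,|y|)$ and $\varepsilon(x,y_1+\dots+y_k)=\varepsilon(|x|,|y_1|+\dots+|y_k|)$ ($=1$ for an empty sum). An $n$-Hom-Lie color algebra $(\mathfrak{g},[\cdot,\ldots,\cdot],\varepsilon,\alpha)$ is a $\Gamma$-graded vector space with an $n$-linear bracket of degree zero, a bicharacter $\varepsilon$ and a degree-zero linear map $\alpha$ such that for homogeneous elements: (i) $[x_1,\ldots,x_i,x_{i+1},\ldots,x_n]=-\varepsilon(x_i,x_{i+1})[x_1,\ldots,x_{i+1},x_i,\ldots,x_n]$; (ii) $[\alpha(x_1),\ldots,\alpha(x_{n-1}),[y_1,\ldots,y_n]]=\sum_{i=1}^n\varepsilon(x_1+\dots+x_{n-1},y_1+\dots+y_{i-1})[\alpha(y_1),\ldots,\alpha(y_{i-1}),[x_1,\ldots,x_{n-1},y_i],\alpha(y_{i+1}),\ldots,\alpha(y_n)]$.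 It is multiplicative if $\alpha([x_1,\ldots,x_n])=[\alpha(x_1),\ldots,\alpha(x_n)]$. *)

theory Defs
  imports Complex_Main
begin

definition bicharacter :: "('g::ab_group_add \<Rightarrow> 'g \<Rightarrow> 'k::field) \<Rightarrow> bool" where
  "bicharacter eps \<longleftrightarrow>
     (\<forall>a b. eps a b \<noteq> 0) \<and>
     (\<forall>a b. eps a b * eps b a = 1) \<and>
     (\<forall>a b c. eps a (b + c) = eps a b * eps a c) \<and>
     (\<forall>a b c. eps (a + b) c = eps a c * eps b c)"

definition graded_vector_space ::
  "('k::field \<Rightarrow> 'v::ab_group_add \<Rightarrow> 'v) \<Rightarrow> ('g \<Rightarrow> 'v set) \<Rightarrow> bool" where
  "graded_vector_space scale G \<longleftrightarrow>
     vector_space scale \<and>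
     (\<forall>a. 0 \<in> G a \<and> (\<forall>x\<in>G a. \<forall>y\<in>G a. x + y \<in> G a) \<and>
          (\<forall>c. \<forall>x\<in>G a. scale c x \<in> G a)) \<and>
     (\<forall>v. \<exists>!c. finite {a. c a \<noteq> 0} \<and> (\<forall>a. c a \<in> G a) \<and>
               v = (\<Sum>a\<in>{a. c a \<noteq> 0}. c a))"

text \<open>The n-ary bracket takes a list of
  n arguments (its value on lists of other lengths is irrelevant). Homogeneous elements
  are handled by quantifying over degree lists (xs ! i in G (ds ! i)).
  List positions are 0-based.\<close>
definition n_hom_lie_color ::
  "('k::field \<Rightarrow> 'v::ab_group_add \<Rightarrow> 'v) \<Rightarrow> ('g::ab_group_add \<Rightarrow> 'v set) \<Rightarrow> nat \<Rightarrow>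
   ('v list \<Rightarrow> 'v) \<Rightarrow> ('g \<Rightarrow> 'g \<Rightarrow> 'k) \<Rightarrow> ('v \<Rightarrow> 'v) \<Rightarrow> bool" where
  "n_hom_lie_color scale G n br eps alpha \<longleftrightarrow>
     graded_vector_space scale G \<and>
     bicharacter eps \<and>
     \<comment> \<open>n-linear bracket\<close>
     (\<forall>xs i. length xs = n \<longrightarrow> i < n \<longrightarrow>
        Vector_Spaces.linear scale scale (\<lambda>v. br (xs[i := v]))) \<and>
     \<comment> \<open>bracket of degree zero\<close>
     (\<forall>xs ds. length xs = n \<longrightarrow> length ds = n \<longrightarrow> (\<forall>i<n. xs ! i \<in> G (ds ! i)) \<longrightarrow>
        br xs \<in> G (sum_list ds)) \<and>
     \<comment> \<open>alpha linear of degree zero\<close>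
     Vector_Spaces.linear scale scale alpha \<and>
     (\<forall>a x. x \<in> G a \<longrightarrow> alpha x \<in> G a) \<and>
     \<comment> \<open>(i) epsilon-skew-symmetry\<close>
     (\<forall>xs ds i. length xs = n \<longrightarrow> length ds = n \<longrightarrow> (\<forall>j<n. xs ! j \<in> G (ds ! j)) \<longrightarrow>
        Suc i < n \<longrightarrow>
        br xs = - scale (eps (ds ! i) (ds ! Suc i))
                        (br (xs[i := xs ! Suc i, Suc i := xs ! i]))) \<and>
     \<comment> \<open>(ii) epsilon-Hom-Nambu identity\<close>
     (\<forall>xs ds ys es. length xs = n - 1 \<longrightarrow> length ds = n - 1 \<longrightarrow>
        length ys = n \<longrightarrow> length es = n \<longrightarrow>
        (\<forall>j<n - 1. xs ! j \<in> G (ds ! j)) \<longrightarrow> (\<forall>j<n. ys ! j \<in> G (es ! j)) \<longrightarrow>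
        br (map alpha xs @ [br ys]) =
          (\<Sum>i<n. scale (eps (sum_list ds) (sum_list (take i es)))
                     (br (map alpha (take i ys) @ [br (xs @ [ys ! i])] @
                          map alpha (drop (Suc i) ys)))))"

definition multiplicative ::
  "nat \<Rightarrow> ('v list \<Rightarrow> 'v) \<Rightarrow> ('v \<Rightarrow> 'v) \<Rightarrow> bool" where
  "multiplicative n br alpha \<longleftrightarrow>
     (\<forall>xs. length xs = n \<longrightarrow> alpha (br xs) = br (map alpha xs))"

end

theory Submission
  imports Defs
begin

text \<open>Yau's twisting principle: composing the bracket and the twisting map of an n-Hom-Lie
  color algebra with a degree-zero linear map \<open>\<beta>\<close> that is multiplicative for the bracket and
  commutes with \<open>\<alpha>\<close> gives again an n-Hom-Lie color algebra, because \<open>\<beta>\<close> can be pushed through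
  every bracket onto the arguments, turning each axiom of the twisted structure into \<open>\<beta>\<close>
  applied to an instance of the original axiom. For a multiplicative algebra \<open>\<beta> = \<alpha>\<^sup>k\<close> is such
  a map, and \<open>k = 2p - 1\<close> yields the p-th derived algebra.\<close>

lemma linear_funpow:
  assumes "vector_space s" and "Vector_Spaces.linear s s f"
  shows "Vector_Spaces.linear s s (f ^^ m)"
proof (induction m)
  case 0
  show ?case using vector_space.linear_ident[OF assms(1)] by (simp add: id_def)
next
  case (Suc m)
  from Vector_Spaces.linear_compose[OF Suc assms(2)] show ?case by (simp add: comp_def)
qed

lemma funpow_preserves:
  assumes "\<And>x. x \<in> A \<Longrightarrow> f x \<in> A" and "x \<in> A"
  shows "(f ^^ m) x \<in> A"
  using assms by (induction m) auto

lemma multiplicative_funpow: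
  assumes "multiplicative n br alpha"
  shows "multiplicative n br (alpha ^^ m)"
  unfolding multiplicative_def
proof (intro allI impI)
  fix xs :: "'a list"
  assume "length xs = n"
  then show "(alpha ^^ m) (br xs) = br (map (alpha ^^ m) xs)"
    using assms unfolding multiplicative_def by (induction m) auto
qed

lemma n_hom_lie_color_twist:
  assumes hom_lie: "n_hom_lie_color scale G n br eps alpha"
    and lin: "Vector_Spaces.linear scale scale beta"
    and deg: "\<And>a x. x \<in> G a \<Longrightarrow> beta x \<in> G a"
    and mult: "multiplicative n br beta"
    and comm: "beta \<circ> alpha = alpha \<circ> beta"
  shows "n_hom_lie_color scale G n (\<lambda>xs. beta (br xs)) eps (beta \<circ> alpha)"
proof -
  note hom_lie_axioms = hom_lie[unfolded n_hom_lie_color_def]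
  note lin_hom = lin[unfolded linear_iff_module_hom]
  have beta_br: "length xs = n \<Longrightarrow> beta (br xs) = br (map beta xs)" for xs
    using mult unfolding multiplicative_def by blast
  have lin_br: "Vector_Spaces.linear scale scale (\<lambda>v. beta (br (xs[i := v])))"
    if "length xs = n" "i < n" for xs i
    using Vector_Spaces.linear_compose[OF _ lin, of scale "\<lambda>v. br (xs[i := v])"] hom_lie_axioms that
    by (simp add: comp_def)
  have lin_alpha: "Vector_Spaces.linear scale scale (beta \<circ> alpha)"
    using Vector_Spaces.linear_compose[OF _ lin] hom_lie_axioms by blast
  have skew: "beta (br xs) = - scale (eps (ds ! i) (ds ! Suc i))
                (beta (br (xs[i := xs ! Suc i, Suc i := xs ! i])))"
    if "length xs = n" "length ds = n" "\<forall>j<n. xs ! j \<in> G (ds ! j)" "Suc i < n"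
    for xs ds i
    using hom_lie_axioms that by (simp add: module_hom.neg[OF lin_hom] module_hom.scale[OF lin_hom])
  have nambu: "beta (br (map (beta \<circ> alpha) xs @ [beta (br ys)])) =
      (\<Sum>i<n. scale (eps (sum_list ds) (sum_list (take i es)))
         (beta (br (map (beta \<circ> alpha) (take i ys) @ [beta (br (xs @ [ys ! i]))] @
                    map (beta \<circ> alpha) (drop (Suc i) ys)))))"
    if "length xs = n - 1" "length ds = n - 1" "length ys = n" "length es = n"
      "\<forall>j<n - 1. xs ! j \<in> G (ds ! j)" "\<forall>j<n. ys ! j \<in> G (es ! j)"
    for xs ds ys es
  proof -
    define xs' where "xs' = map beta xs"
    define ys' where "ys' = map beta ys"
    have "length xs' = n - 1" "length ys' = n"
      "\<forall>j<n - 1. xs' ! j \<in> G (ds ! j)" "\<forall>j<n. ys' ! j \<in> G (es ! j)"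
      using that deg by (auto simp: xs'_def ys'_def)
    then have hom_nambu: "br (map alpha xs' @ [br ys']) =
        (\<Sum>i<n. scale (eps (sum_list ds) (sum_list (take i es)))
           (br (map alpha (take i ys') @ [br (xs' @ [ys' ! i])] @ map alpha (drop (Suc i) ys'))))"
      using hom_lie_axioms \<open>length ds = n - 1\<close> \<open>length es = n\<close> by blast
    have inner: "beta (br (xs @ [ys ! i])) = br (xs' @ [ys' ! i])" if "i < n" for i
      using beta_br[of "xs @ [ys ! i]"] \<open>length xs = n - 1\<close> \<open>length ys = n\<close> that
      by (simp add: xs'_def ys'_def)
    have "beta (br (map (beta \<circ> alpha) xs @ [beta (br ys)])) = beta (br (map alpha xs' @ [br ys']))"
      using beta_br[of ys] \<open>length ys = n\<close> by (simp add: comm xs'_def ys'_def)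
    also have "\<dots> = (\<Sum>i<n. scale (eps (sum_list ds) (sum_list (take i es)))
           (beta (br (map alpha (take i ys') @ [br (xs' @ [ys' ! i])] @
                      map alpha (drop (Suc i) ys')))))"
      by (simp add: hom_nambu module_hom.sum[OF lin_hom] module_hom.scale[OF lin_hom])
    also have "\<dots> = (\<Sum>i<n. scale (eps (sum_list ds) (sum_list (take i es)))
         (beta (br (map (beta \<circ> alpha) (take i ys) @ [beta (br (xs @ [ys ! i]))] @
                    map (beta \<circ> alpha) (drop (Suc i) ys)))))"
      by (rule sum.cong) (simp_all add: inner comm ys'_def take_map drop_map)
    finally show ?thesis .
  qed
  show ?thesis
    unfolding n_hom_lie_color_def
    using hom_lie_axioms lin_br lin_alpha skew nambu deg by simp
qed

lemma n_hom_lie_color_derived: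
  assumes "n_hom_lie_color scale G n br eps alpha" and "multiplicative n br alpha"
  shows "n_hom_lie_color scale G n (\<lambda>xs. (alpha ^^ k) (br xs)) eps (alpha ^^ Suc k)"
proof -
  have "vector_space scale" and "Vector_Spaces.linear scale scale alpha"
    and "\<And>a x. x \<in> G a \<Longrightarrow> alpha x \<in> G a"
    using assms(1) unfolding n_hom_lie_color_def graded_vector_space_def by blast+
  then have "n_hom_lie_color scale G n (\<lambda>xs. (alpha ^^ k) (br xs)) eps (alpha ^^ k \<circ> alpha)"
    by (intro n_hom_lie_color_twist assms(1) linear_funpow multiplicative_funpow assms(2))
      (simp_all add: funpow_preserves funpow_swap1 fun_eq_iff)
  then show ?thesis by (simp only: funpow_Suc_right)
qed

theorem corollary3p4:
  fixes scale :: "'k::field_char_0 \<Rightarrow> 'v::ab_group_add \<Rightarrow> 'v"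
    and G :: "'g::ab_group_add \<Rightarrow> 'v set"
    and n :: nat
    and br :: "'v list \<Rightarrow> 'v"
    and eps :: "'g \<Rightarrow> 'g \<Rightarrow> 'k"
    and alpha :: "'v \<Rightarrow> 'v"
  assumes "n_hom_lie_color scale G n br eps alpha"
    and "multiplicative n br alpha"
    and "p \<ge> (1::nat)"
  shows "n_hom_lie_color scale G n (\<lambda>xs. (alpha ^^ (2 * p - 1)) (br xs)) eps (alpha ^^ (2 * p))"
proof -
  have "2 * p = Suc (2 * p - 1)" using assms(3) by simp
  then show ?thesis using n_hom_lie_color_derived[OF assms(1,2), of "2 * p - 1"] by simp
qed

end
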